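(* For every $n\ge 3$, the polynomial \[ Q_n(x) = x^{n} - 2(n-1)\sum_{j=1}^{n-1} x^{j} + 1 \] has a unique real root $\lambda_n$ larger than one. Moreover, for $n\ge 4$, \[ 2n-1 - \frac{1}{(2n-1)^{n-2}} < \lambda_n < 2n-1. \] *)

theory Defs
  imports Complex_Main "HOL-Computational_Algebra.Polynomial"
begin

definition Q :: "nat \<Rightarrow> real poly" where
  "Q n = monom 1 n - smult (2 * (real n - 1)) (\<Sum>j = 1..n-1. monom 1 j) + 1"

end

theory Submission
  imports Defs
begin

text \<open>
  Multiplying by \<open>x - 1\<close> turns \<open>Q\<^sub>n\<close> into the four-term polynomial
  \<open>x\<^sup>n\<^sup>+\<^sup>1 - m x\<^sup>n + m x - 1\<close> with \<open>m = 2n - 1\<close>. Its coefficients are antisymmetric,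
  so with a root \<open>a > 1\<close> it also has the roots \<open>1/a\<close> and \<open>1\<close>; two roots above \<open>1\<close> would
  give four roots in all, and Rolle's theorem applied twice would produce two positive
  roots of the second derivative \<open>n x\<^sup>n\<^sup>-\<^sup>2((n+1)x - m(n-1))\<close>, which has only one.
  The root lies below \<open>m\<close> because \<open>x\<^sup>n(x - m) + m x - 1 > 0\<close> for \<open>x \<ge> m\<close>, and above
  \<open>m - 1/m\<^sup>n\<^sup>-\<^sup>2\<close> because Bernoulli's inequality makes the polynomial negative there.
\<close>

lemma Rolle_has_real_derivative:
  fixes f f' :: "real \<Rightarrow> real"
  assumes deriv: "\<And>x. (f has_real_derivative f' x) (at x)" and "a < b" and "f a = f b"
  shows "\<exists>z. a < z \<and> z < b \<and> f' z = 0"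
proof -
  have "continuous_on {a..b} f"
    by (intro continuous_at_imp_continuous_on ballI DERIV_isCont[OF deriv])
  then obtain z where "a < z" "z < b" "(f has_real_derivative 0) (at z)"
    using Rolle[OF \<open>a < b\<close> \<open>f a = f b\<close>] deriv real_differentiable_def by blast
  then show ?thesis
    using DERIV_unique[OF deriv] by blast
qed

definition antipalindromic :: "nat \<Rightarrow> real \<Rightarrow> real \<Rightarrow> real" where
  "antipalindromic n m x = x ^ (n + 1) - m * x ^ n + m * x - 1"

lemma antipalindromic_eq: "antipalindromic n m x = x ^ n * (x - m) + m * x - 1"
  by (simp add: antipalindromic_def algebra_simps)

lemma antipalindromic_one [simp]: "antipalindromic n m 1 = 0"
  by (simp add: antipalindromic_def)

lemma antipalindromic_inverse:
  assumes "a \<noteq> 0"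
  shows "antipalindromic n m (1 / a) * a ^ (n + 1) = - antipalindromic n m a"
  using assms by (simp add: antipalindromic_def field_simps)

lemma antipalindromic_deriv:
  assumes "n \<ge> 1"
  shows "(antipalindromic n m has_real_derivative
           real (n + 1) * x ^ n - m * real n * x ^ (n - 1) + m) (at x)"
proof -
  have "x ^ (n - 1) * x = x ^ n"
    using assms by (cases n) simp_all
  then show ?thesis
    unfolding antipalindromic_def by (auto intro!: derivative_eq_intros simp: algebra_simps)
qed

lemma antipalindromic_deriv2:
  assumes "n \<ge> 2"
  shows "((\<lambda>x. real (n + 1) * x ^ n - m * real n * x ^ (n - 1) + m) has_real_derivative
           real n * x ^ (n - 2) * (real (n + 1) * x - m * real (n - 1))) (at x)"
proof -
  have n: "n - Suc 0 = Suc (n - 2)"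
    using assms by simp
  have "((\<lambda>x. real (n + 1) * x ^ n - m * real n * x ^ (n - 1) + m) has_real_derivative
          real (n + 1) * (real n * x ^ (n - 1)) - m * real n * (real (n - 1) * x ^ (n - 2))) (at x)"
    using assms by (auto intro!: derivative_eq_intros simp: numeral_2_eq_2)
  then show ?thesis
    by (rule DERIV_cong) (simp add: n algebra_simps)
qed

lemma antipalindromic_root_gt_one_unique:
  assumes "n \<ge> 2" and "1 < a" "1 < b"
    and "antipalindromic n m a = 0" "antipalindromic n m b = 0"
  shows "a = b"
proof -
  define d1 where "d1 x = real (n + 1) * x ^ n - m * real n * x ^ (n - 1) + m" for x
  define d2 where "d2 x = real n * x ^ (n - 2) * (real (n + 1) * x - m * real (n - 1))" for x
  have deriv1: "(antipalindromic n m has_real_derivative d1 x) (at x)" for x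
    unfolding d1_def using antipalindromic_deriv assms(1) by simp
  have deriv2: "(d1 has_real_derivative d2 x) (at x)" for x
    unfolding d1_def d2_def using antipalindromic_deriv2[OF assms(1)] .
  have d2_root: "w = m * real (n - 1) / real (n + 1)" if "0 < w" "d2 w = 0" for w
  proof -
    have "real (n + 1) * w = m * real (n - 1)"
      using that assms(1) by (auto simp: d2_def)
    then show ?thesis
      by (simp add: field_simps)
  qed
  have False if ab: "1 < a" "a < b" "antipalindromic n m a = 0" "antipalindromic n m b = 0" for a b
  proof -
    have "antipalindromic n m (1 / a) = 0" "0 < 1 / a" "1 / a < 1"
      using antipalindromic_inverse[of a n m] ab by auto
    then obtain z1 where z1: "1 / a < z1" "z1 < 1" "d1 z1 = 0"
      using Rolle_has_real_derivative[OF deriv1, of "1 / a" 1] by auto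
    obtain z2 where z2: "1 < z2" "z2 < a" "d1 z2 = 0"
      using Rolle_has_real_derivative[OF deriv1, of 1 a] ab by auto
    obtain z3 where z3: "a < z3" "d1 z3 = 0"
      using Rolle_has_real_derivative[OF deriv1, of a b] ab by auto
    obtain w1 where w1: "z1 < w1" "w1 < z2" "d2 w1 = 0"
      using Rolle_has_real_derivative[OF deriv2, of z1 z2] z1 z2 by auto
    obtain w2 where w2: "z2 < w2" "d2 w2 = 0"
      using Rolle_has_real_derivative[OF deriv2, of z2 z3] z2 z3 by auto
    have "0 < w1"
      using \<open>0 < 1 / a\<close> z1(1) w1(1) by linarith
    then show False
      using d2_root[of w1] d2_root[of w2] w1 w2 by simp
  qed
  then show "a = b"
    using assms(2-5) by (cases a b rule: linorder_cases) auto
qed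

lemma antipalindromic_pos:
  assumes "1 \<le> m" "m \<le> x" "1 < x"
  shows "0 < antipalindromic n m x"
proof -
  have "0 \<le> x ^ n * (x - m)"
    using assms by simp
  moreover have "1 * x \<le> m * x"
    using assms by (intro mult_right_mono) auto
  ultimately show ?thesis
    unfolding antipalindromic_eq using assms(3) by linarith
qed

lemma antipalindromic_neg_below:
  assumes "n \<ge> 4" and "1 \<le> m" and "real n - 1 < m"
  shows "antipalindromic n m (m - 1 / m ^ (n - 2)) < 0"
proof -
  define e where "e = 1 / m ^ (n - 2)"
  have "(real n - 1) * m < m * m"
    using assms by (intro mult_strict_right_mono) auto
  also have "\<dots> \<le> m ^ (n - 2)"
    using power_increasing[of 2 "n - 2" m] assms by (simp add: power2_eq_square)
  finally have "(real n - 1) * m < m ^ (n - 2)" .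
  then have small: "(real n - 1) * e * m < 1"
    using assms(2) by (simp add: e_def field_simps)
  have "1 \<le> m ^ (n - 2)"
    using assms(2) by simp
  then have "0 < e" "e \<le> m"
    using assms(2) by (auto simp: e_def intro: order_trans[of _ 1])
  have e_mn: "e * m ^ n = m * m"
  proof -
    have "n = 2 + (n - 2)"
      using assms(1) by simp
    then have "m ^ n = m ^ 2 * m ^ (n - 2)"
      by (metis power_add)
    then show ?thesis
      using assms(2) by (simp add: e_def power2_eq_square)
  qed
  have "m ^ n * (1 - real n * e / m) \<le> m ^ n * (1 - e / m) ^ n"
    using Bernoulli_inequality[of "- e / m" n] \<open>e \<le> m\<close> assms(2)
    by (intro mult_left_mono) (auto simp: field_simps)
  also have "\<dots> = (m - e) ^ n"
    using assms(2) by (simp add: power_mult_distrib[symmetric] field_simps)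
  finally have "e * m ^ n * (1 - real n * e / m) \<le> e * (m - e) ^ n"
    using \<open>0 < e\<close> by (simp add: mult_left_mono mult.assoc)
  moreover have "e * m ^ n * (1 - real n * e / m) = m * m - real n * e * m"
    unfolding e_mn using assms(2) by (simp add: field_simps)
  ultimately have "m * m - real n * e * m \<le> e * (m - e) ^ n"
    by simp
  moreover have "antipalindromic n m (m - e) = m * m - e * m - 1 - e * (m - e) ^ n"
    unfolding antipalindromic_eq by (simp add: algebra_simps)
  moreover have "(real n - 1) * e * m = real n * e * m - e * m"
    by (simp add: algebra_simps)
  ultimately have "antipalindromic n m (m - e) < 0"
    using small by linarith
  then show ?thesis
    unfolding e_def .
qed

lemma poly_Q_times:
  assumes "n \<ge> 1"
  shows "(x - 1) * poly (Q n) x = antipalindromic n (2 * real n - 1) x"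
proof -
  have "(x - 1) * (\<Sum>j = 1..k. x ^ j) = x ^ (k + 1) - x" for k
    by (induction k) (auto simp: algebra_simps)
  from this[of "n - 1"] have geometric: "(x - 1) * (\<Sum>j = 1..n - 1. x ^ j) = x ^ n - x"
    using assms by simp
  have "(x - 1) * poly (Q n) x
      = (x - 1) * x ^ n - 2 * (real n - 1) * ((x - 1) * (\<Sum>j = 1..n - 1. x ^ j)) + (x - 1)"
    by (simp add: Q_def poly_monom poly_sum algebra_simps)
  also have "\<dots> = antipalindromic n (2 * real n - 1) x"
    unfolding geometric antipalindromic_def by (simp add: algebra_simps)
  finally show ?thesis .
qed

lemma sgn_poly_Q:
  assumes "n \<ge> 1" and "1 < x"
  shows "sgn (poly (Q n) x) = sgn (antipalindromic n (2 * real n - 1) x)"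
  using arg_cong[OF poly_Q_times[OF assms(1), of x], of sgn] assms(2)
  by (simp add: sgn_mult)

lemma poly_Q_one_neg:
  assumes "n \<ge> 3"
  shows "poly (Q n) 1 < 0"
proof -
  have "poly (Q n) 1 = 2 - 2 * (real n - 1) * (real n - 1)"
    using assms by (simp add: Q_def poly_monom poly_sum of_nat_diff)
  moreover have "2 * 2 \<le> (real n - 1) * (real n - 1)"
    using assms by (intro mult_mono) auto
  ultimately show ?thesis
    by linarith
qed

lemma poly_Q_root_gt_one_unique:
  assumes "n \<ge> 2" and "1 < a" "1 < b" and "poly (Q n) a = 0" "poly (Q n) b = 0"
  shows "a = b"
  using antipalindromic_root_gt_one_unique[OF assms(1-3)] sgn_poly_Q[of n a] sgn_poly_Q[of n b]
    assms
  by (simp add: sgn_0_0)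

lemma poly_Q_pos:
  assumes "n \<ge> 1" and "2 * real n - 1 \<le> x" and "1 < x"
  shows "0 < poly (Q n) x"
  using antipalindromic_pos[OF _ assms(2,3), of n] sgn_poly_Q[OF assms(1,3)] assms(1)
  by (simp add: sgn_1_pos)

lemma poly_Q_neg_below:
  assumes "n \<ge> 4"
  shows "poly (Q n) (2 * real n - 1 - 1 / (2 * real n - 1) ^ (n - 2)) < 0"
proof -
  define m where "m = 2 * real n - 1"
  have "5 \<le> m"
    using assms by (simp add: m_def)
  then have "1 / m ^ (n - 2) \<le> 1"
    by simp
  then have "1 < m - 1 / m ^ (n - 2)"
    using \<open>5 \<le> m\<close> by linarith
  moreover have "antipalindromic n m (m - 1 / m ^ (n - 2)) < 0"
    using assms by (intro antipalindromic_neg_below) (auto simp: m_def)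
  ultimately show ?thesis
    using sgn_poly_Q[of n "m - 1 / m ^ (n - 2)"] assms by (simp add: m_def sgn_1_neg)
qed

theorem lemma6p4:
  fixes n :: nat
  assumes "n \<ge> 3"
  shows "(\<exists>!l::real. l > 1 \<and> poly (Q n) l = 0) \<and>
         (n \<ge> 4 \<longrightarrow> (\<forall>l::real. l > 1 \<and> poly (Q n) l = 0 \<longrightarrow>
             2 * real n - 1 - 1 / (2 * real n - 1) ^ (n - 2) < l \<and> l < 2 * real n - 1))"
proof -
  define m where "m = 2 * real n - 1"
  have "5 \<le> m"
    using assms by (simp add: m_def)
  have unique: "a = b" if "1 < a \<and> poly (Q n) a = 0" "1 < b \<and> poly (Q n) b = 0" for a b
    using poly_Q_root_gt_one_unique[of n a b] that assms by simp
  have "0 < poly (Q n) m"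
    using poly_Q_pos[of n m] \<open>5 \<le> m\<close> assms by (simp add: m_def)
  moreover have "1 < m"
    using \<open>5 \<le> m\<close> by simp
  ultimately obtain l0 where "1 < l0 \<and> poly (Q n) l0 = 0"
    using poly_IVT_pos[OF _ poly_Q_one_neg[OF assms]] by blast
  moreover have "m - 1 / m ^ (n - 2) < l \<and> l < m"
    if n4: "n \<ge> 4" and l: "1 < l \<and> poly (Q n) l = 0" for l
  proof
    show "l < m"
      using poly_Q_pos[of n l] l assms by (force simp: m_def)
    have "1 / m ^ (n - 2) \<le> 1" "0 < 1 / m ^ (n - 2)"
      using \<open>5 \<le> m\<close> by auto
    then obtain r where "m - 1 / m ^ (n - 2) < r" "r < m" "poly (Q n) r = 0"
      using poly_IVT_pos[OF _ poly_Q_neg_below[OF n4, folded m_def] \<open>0 < poly (Q n) m\<close>]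
      by auto
    moreover have "r = l"
      using unique[of r l] l calculation \<open>1 / m ^ (n - 2) \<le> 1\<close> \<open>5 \<le> m\<close> by simp
    ultimately show "m - 1 / m ^ (n - 2) < l"
      by simp
  qed
  ultimately show ?thesis
    using unique unfolding m_def by blast
qed

end
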